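(* Let $R_{\mathrm{tr},\mathbb{F}}(\rho):=\min_{\sigma\in\mathbb{F}}\frac12\|\rho-\sigma\|_1$. If a state $\Phi$ satisfies $D_{\min,\mathbb{F}}(\Phi)=D_{s,\mathbb{F}}(\Phi)=:r$ or $D_{\min,\mathrm{aff}(\mathbb{F})}(\Phi)=D_{\max,\mathbb{F}}(\Phi)=:r$, then $R_{\mathrm{tr},\mathbb{F}}(\Phi)=1-2^{-r}$.
   Context: Finite-dimensional Hilbert space, $\log$ base 2. $\mathbb{F}$ is a convex and closed set of (free) states. $D_{\min,\mathbb{F}}(\rho)=\inf_{\sigma\in\mathbb{F}}(-\log\mathrm{Tr}[\Pi_\rho\sigma])$ ($\Pi_\rho$ support projector); $D_{\min,\mathrm{aff}(\mathbb{F})}(\rho)=\inf_{\sigma\in\mathrm{aff}(\mathbb{F})}\sup\{-\log\mathrm{Tr}[P\sigma]:0\le P\le\mathbb{1},\mathrm{Tr}[P\rho]=1\}$ with $\mathrm{aff}(\mathbb{F})$ the affine hull; $D_{\max,\mathbb{F}}(\rho)=\inf\{\log(1+s):\frac{\rho+s\tau}{1+s}\in\mathbb{F},\tau\text{ a state}\}$; $D_{s,\mathbb{F}}(\rho)=\inf\{\log(1+s):\frac{\rho+s\tau}{1+s}\in\mathbb{F},\tau\in\mathbb{F}\}$. *)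

theory Defs
  imports "HOL-Analysis.Analysis"
begin

type_synonym 'n cmat = "complex^'n::finite^'n::finite"

definition cinner :: "complex^('n::finite) \<Rightarrow> complex^'n \<Rightarrow> complex" where
  "cinner x y = (\<Sum>i\<in>UNIV. cnj (x $ i) * y $ i)"

definition dagger :: "('n::finite) cmat \<Rightarrow> 'n cmat" where
  "dagger A = (\<chi> i j. cnj (A $ j $ i))"

definition hermitian :: "('n::finite) cmat \<Rightarrow> bool" where
  "hermitian A \<longleftrightarrow> dagger A = A"

definition psd :: "('n::finite) cmat \<Rightarrow> bool" where
  "psd A \<longleftrightarrow> hermitian A \<and> (\<forall>v. 0 \<le> Re (cinner v (A *v v)))"

definition is_state :: "('n::finite) cmat \<Rightarrow> bool" where
  "is_state \<rho> \<longleftrightarrow> psd \<rho> \<and> trace \<rho> = 1"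

definition effect :: "('n::finite) cmat \<Rightarrow> bool" where
  "effect P \<longleftrightarrow> psd P \<and> psd (mat 1 - P)"

definition msqrt :: "('n::finite) cmat \<Rightarrow> 'n cmat" where
  "msqrt A = (THE B. psd B \<and> B ** B = A)"

definition trace_norm :: "('n::finite) cmat \<Rightarrow> real" where
  "trace_norm X = Re (trace (msqrt (dagger X ** X)))"

definition supp_proj :: "('n::finite) cmat \<Rightarrow> 'n cmat" where
  "supp_proj \<rho> = (THE P. hermitian P \<and> P ** P = P \<and> range (\<lambda>x. P *v x) = range (\<lambda>x. \<rho> *v x))"

definition neglog :: "real \<Rightarrow> ereal" where
  "neglog t = (if t > 0 then ereal (- log 2 t) else \<infinity>)"

definition Dmin :: "('n::finite) cmat set \<Rightarrow> 'n cmat \<Rightarrow> ereal" where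
  "Dmin F \<rho> = (INF \<sigma>\<in>F. neglog (Re (trace (supp_proj \<rho> ** \<sigma>))))"

definition Dmin_aff :: "('n::finite) cmat set \<Rightarrow> 'n cmat \<Rightarrow> ereal" where
  "Dmin_aff F \<rho> = (INF \<sigma>\<in>affine hull F.
       SUP P\<in>{P. effect P \<and> trace (P ** \<rho>) = 1}. neglog (Re (trace (P ** \<sigma>))))"

definition Dmax :: "('n::finite) cmat set \<Rightarrow> 'n cmat \<Rightarrow> ereal" where
  "Dmax F \<rho> = Inf {ereal (log 2 (1 + s)) | s. s \<ge> 0 \<and>
       (\<exists>\<tau>. is_state \<tau> \<and> (1 / (1 + s)) *\<^sub>R (\<rho> + s *\<^sub>R \<tau>) \<in> F)}"

definition Ds :: "('n::finite) cmat set \<Rightarrow> 'n cmat \<Rightarrow> ereal" where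
  "Ds F \<rho> = Inf {ereal (log 2 (1 + s)) | s. s \<ge> 0 \<and>
       (\<exists>\<tau>\<in>F. (1 / (1 + s)) *\<^sub>R (\<rho> + s *\<^sub>R \<tau>) \<in> F)}"

definition Rtr :: "('n::finite) cmat set \<Rightarrow> 'n cmat \<Rightarrow> ereal" where
  "Rtr F \<rho> = (INF \<sigma>\<in>F. ereal (trace_norm (\<rho> - \<sigma>) / 2))"

end

theory Submission
  imports Defs
begin

(* Lower bound: for an effect P with Tr[P Phi] = 1 and a state sigma, diagonalising the
   traceless Hermitian matrix Phi - sigma gives the Helstrom-type estimate
   1 - Tr[P sigma] <= ||Phi - sigma||_1 / 2. Either hypothesis on D_min provides, for every
   sigma in F, such tests with Tr[P sigma] at most (or arbitrarily close to) 2^-r -- for D_min,F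
   the support projector of Phi -- so R_tr >= 1 - 2^-r.
   Upper bound: if (Phi + s tau) / (1 + s) lies in F for a state tau, its trace distance to Phi
   is s / (1 + s) * ||Phi - tau||_1 / 2 <= 1 - 1 / (1 + s); since D_s >= D_max, letting
   log (1 + s) decrease to r gives R_tr <= 1 - 2^-r.
   Trace norms are computed from a spectral theorem for Hermitian matrices, obtained by
   maximising the quadratic form on successive orthogonal complements. *)

lemma dagger_dagger [simp]: "dagger (dagger A) = A"
  by (simp add: dagger_def vec_eq_iff)

lemma dagger_matrix_mult: "dagger (A ** B) = dagger B ** dagger A"
  by (simp add: dagger_def vec_eq_iff matrix_matrix_mult_def mult.commute)

lemma dagger_diff: "dagger (A - B) = dagger A - dagger B"
  by (simp add: dagger_def vec_eq_iff)

lemma hermitian_diff: "hermitian A \<Longrightarrow> hermitian B \<Longrightarrow> hermitian (A - B)"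
  by (simp add: hermitian_def dagger_diff)

lemma hermitian_state: "is_state \<rho> \<Longrightarrow> hermitian \<rho>"
  by (simp add: is_state_def psd_def)

lemma cinner_dagger: "cinner x (A *v y) = cinner (dagger A *v x) y"
  unfolding cinner_def dagger_def matrix_vector_mult_def
  by (simp add: sum_distrib_left sum_distrib_right mult_ac) (rule sum.swap)

lemma cinner_hermitian: "hermitian A \<Longrightarrow> cinner x (A *v y) = cinner (A *v x) y"
  by (metis cinner_dagger hermitian_def)

lemma cnj_cinner: "cnj (cinner x y) = cinner y x"
  by (simp add: cinner_def mult.commute)

lemma Re_cinner: "Re (cinner x y) = inner x y"
  by (simp add: cinner_def inner_vec_def inner_complex_def)

lemma Im_cinner: "Im (cinner x y) = inner (\<i> *s x) y"
  by (simp add: cinner_def inner_vec_def inner_complex_def Im_sum)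

lemma cinner_eq_0_iff: "cinner x y = 0 \<longleftrightarrow> inner x y = 0 \<and> inner (\<i> *s x) y = 0"
  by (simp add: complex_eq_iff Re_cinner Im_cinner)

lemma cinner_self: "cinner x x = of_real ((norm x)\<^sup>2)"
  by (simp add: complex_eq_iff Re_cinner Im_cinner power2_norm_eq_inner inner_vec_def
      inner_complex_def)

lemma cinner_axis: "cinner (axis j 1) x = x $ j"
  by (simp add: cinner_def axis_def if_distrib[of cnj] if_distrib[of "\<lambda>x. x * _"] cong: if_cong)

lemma cinner_smult_left: "cinner (c *s x) y = cnj c * cinner x y"
  by (simp add: cinner_def sum_distrib_left mult_ac)

lemma scaleR_eq_of_real_smult: "c *\<^sub>R (v::complex^'n) = of_real c *s v"
  by (simp add: vec_eq_iff complex_eq_iff)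

lemma matrix_vector_mult_scaleR: "A *v (c *\<^sub>R v) = c *\<^sub>R (A *v (v::complex^'n))"
  by (simp add: scaleR_eq_of_real_smult vec.scale)

lemma hermitian_inner_commute: "hermitian A \<Longrightarrow> inner x (A *v y) = inner y (A *v x)"
  by (metis Re_cinner cinner_hermitian inner_commute)

section \<open>Spectral theorem for Hermitian matrices\<close>

lemma linear_coeff_eq_0_if_quadratic_nonpos:
  fixes a b :: real
  assumes "\<And>t. a * t + b * t\<^sup>2 \<le> 0"
  shows "a = 0"
proof (rule ccontr)
  assume "a \<noteq> 0"
  define c where "c = \<bar>b\<bar> + 1"
  define t where "t = a / (2 * c)"
  have c: "c > 0" and "- c \<le> b" by (simp_all add: c_def add_pos_nonneg)
  then have "a * t - c * t\<^sup>2 \<le> a * t + b * t\<^sup>2"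
    using mult_right_mono[of "- c" b "t\<^sup>2"] by simp
  also have "\<dots> \<le> 0" by (rule assms)
  finally have "a\<^sup>2 / (4 * c) \<le> 0"
    unfolding t_def using c by (simp add: field_simps power2_eq_square)
  with \<open>a \<noteq> 0\<close> c show False by (simp add: divide_le_0_iff)
qed

lemma hermitian_quadratic_form_max_eigenvector:
  fixes A :: "'n::finite cmat"
  assumes herm: "hermitian A" and W: "subspace W" and AW: "\<And>v. v \<in> W \<Longrightarrow> A *v v \<in> W"
    and u: "u \<in> W" "norm u = 1"
    and max: "\<And>v. v \<in> W \<Longrightarrow> norm v = 1 \<Longrightarrow> inner v (A *v v) \<le> inner u (A *v u)"
  shows "A *v u = of_real (inner u (A *v u)) *s u"
proof -
  define f where "f v = inner v (A *v v)" for v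
  define \<mu> where "\<mu> = f u"
  have bound: "f v \<le> \<mu> * (norm v)\<^sup>2" if "v \<in> W" for v
  proof (cases "v = 0")
    case False
    have "f ((1 / norm v) *\<^sub>R v) \<le> \<mu>"
      unfolding f_def \<mu>_def using False that W by (intro max) (auto simp: subspace_scale)
    then show ?thesis
      using False by (simp add: f_def matrix_vector_mult_scaleR field_simps power2_eq_square)
  qed (simp add: f_def)
  have orth: "2 * inner w (A *v u - \<mu> *\<^sub>R u) = 0" if w: "w \<in> W" for w
  proof (rule linear_coeff_eq_0_if_quadratic_nonpos[where b = "f w - \<mu> * (norm w)\<^sup>2"])
    fix t :: real
    have "inner u u = 1"
      using u(2) by (simp add: power2_norm_eq_inner[symmetric])
    then have "(norm (u + t *\<^sub>R w))\<^sup>2 = 1 + 2 * t * inner w u + t\<^sup>2 * (norm w)\<^sup>2"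
      unfolding power2_norm_eq_inner
      by (simp add: inner_add_left inner_add_right power2_eq_square algebra_simps inner_commute)
    moreover have "f (u + t *\<^sub>R w) = f u + 2 * t * inner w (A *v u) + t\<^sup>2 * f w"
      unfolding f_def using hermitian_inner_commute[OF herm, of u w]
      by (simp add: matrix_vector_right_distrib matrix_vector_mult_scaleR inner_add_left
          inner_add_right power2_eq_square algebra_simps)
    moreover have "f (u + t *\<^sub>R w) \<le> \<mu> * (norm (u + t *\<^sub>R w))\<^sup>2"
      using W u w by (intro bound) (simp add: subspace_add subspace_scale)
    ultimately show "2 * inner w (A *v u - \<mu> *\<^sub>R u) * t + (f w - \<mu> * (norm w)\<^sup>2) * t\<^sup>2 \<le> 0"
      unfolding \<mu>_def by (simp add: inner_diff_right algebra_simps)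
  qed
  have "A *v u - \<mu> *\<^sub>R u \<in> W"
    using W u AW by (simp add: subspace_diff subspace_scale)
  from orth[OF this] have "A *v u - \<mu> *\<^sub>R u = 0" by simp
  then show ?thesis by (simp add: \<mu>_def f_def scaleR_eq_of_real_smult)
qed

lemma hermitian_eigenvector_orthogonal:
  fixes A :: "'n::finite cmat" and S :: "(complex^'n) set"
  assumes herm: "hermitian A" and S: "finite S" "card S < CARD('n)"
    and eig: "\<And>s. s \<in> S \<Longrightarrow> \<exists>l::real. A *v s = of_real l *s s"
  obtains u and l :: real
  where "norm u = 1" "\<And>s. s \<in> S \<Longrightarrow> cinner s u = 0" "A *v u = of_real l *s u"
proof -
  define T where "T = S \<union> (\<lambda>s. \<i> *s s) ` S"
  define W where "W = {v. \<forall>s\<in>S. cinner s v = 0}"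
  have W_eq: "W = {v. \<forall>t\<in>T. orthogonal t v}"
    by (auto simp: W_def T_def cinner_eq_0_iff orthogonal_def)
  have W: "subspace W"
    unfolding W_eq by (auto simp: subspace_def orthogonal_clauses)
  have AW: "A *v v \<in> W" if "v \<in> W" for v
  proof -
    have "cinner s (A *v v) = 0" if "s \<in> S" for s
    proof -
      obtain l :: real where "A *v s = of_real l *s s" using eig \<open>s \<in> S\<close> by blast
      then show ?thesis
        using cinner_hermitian[OF herm] \<open>v \<in> W\<close> \<open>s \<in> S\<close> by (simp add: cinner_smult_left W_def)
    qed
    then show ?thesis by (simp add: W_def)
  qed
  have "card T \<le> card S + card S"
    unfolding T_def by (metis add_le_mono card_Un_le card_image_le S(1) order_trans le_refl)
  then have "dim T < DIM(complex^'n)"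
    using dim_le_card'[of T] S by (simp add: T_def)
  then obtain x where "x \<noteq> 0" "\<And>y. y \<in> span T \<Longrightarrow> orthogonal x y"
    using orthogonal_to_subspace_exists by blast
  then have "x \<in> W" "x \<noteq> 0"
    unfolding W_eq by (auto intro: span_base simp: orthogonal_commute)
  then have "(1 / norm x) *\<^sub>R x \<in> W \<inter> sphere 0 1"
    using W by (simp add: subspace_scale)
  then have nonempty: "W \<inter> sphere 0 1 \<noteq> {}" by blast
  have compact: "compact (W \<inter> sphere 0 1)"
    using W by (intro closed_Int_compact compact_sphere closed_subspace)
  have "continuous_on (W \<inter> sphere 0 1) (\<lambda>v. inner v (A *v v))"
    by (intro continuous_intros linear_continuous_on matrix_vector_mul_bounded_linear)
  from continuous_attains_sup[OF compact nonempty this]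
  obtain u where u: "u \<in> W \<inter> sphere 0 1"
    and max: "\<And>v. v \<in> W \<inter> sphere 0 1 \<Longrightarrow> inner v (A *v v) \<le> inner u (A *v u)"
    by blast
  have "A *v u = of_real (inner u (A *v u)) *s u"
    using u max by (intro hermitian_quadratic_form_max_eigenvector[OF herm W AW]) auto
  with u show ?thesis
    by (intro that[of u "inner u (A *v u)"]) (auto simp: W_def)
qed

lemma hermitian_orthonormal_eigenvectors:
  fixes A :: "'n::finite cmat"
  assumes herm: "hermitian A" and "finite I"
  shows "\<exists>(u :: 'n \<Rightarrow> complex^'n) (l :: 'n \<Rightarrow> real).
    (\<forall>i\<in>I. \<forall>j\<in>I. cinner (u i) (u j) = (if i = j then 1 else 0)) \<and>
    (\<forall>i\<in>I. A *v u i = of_real (l i) *s u i)"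
  using \<open>finite I\<close>
proof (induction I rule: finite_induct)
  case (insert j I)
  then obtain u l where orth: "\<forall>i\<in>I. \<forall>k\<in>I. cinner (u i) (u k) = (if i = k then 1 else 0)"
    and eig: "\<forall>i\<in>I. A *v u i = of_real (l i) *s u i"
    by blast
  have "card I < card (insert j I)" using insert by simp
  also have "\<dots> \<le> CARD('n)" by (rule card_mono) auto
  finally have "card (u ` I) < CARD('n)"
    using card_image_le[OF insert(1), of u] by linarith
  then obtain v and l' :: real
    where v: "norm v = 1" "\<And>s. s \<in> u ` I \<Longrightarrow> cinner s v = 0" "A *v v = of_real l' *s v"
    using hermitian_eigenvector_orthogonal[OF herm, of "u ` I"] eig insert(1) by blast
  have "cinner v v = 1" using v(1) by (simp add: cinner_self)
  moreover have "cinner (u i) v = 0" "cinner v (u i) = 0" if "i \<in> I" for i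
    using v(2) that cnj_cinner[of v "u i"] by auto
  ultimately show ?case
    using orth eig v(3) \<open>j \<notin> I\<close>
    by (intro exI[of _ "u(j := v)"] exI[of _ "l(j := l')"]) auto
qed simp

definition diag_mat :: "('n::finite \<Rightarrow> complex) \<Rightarrow> 'n cmat" where
  "diag_mat c = (\<chi> i j. if i = j then c i else 0)"

definition unitary :: "('n::finite) cmat \<Rightarrow> bool" where
  "unitary U \<longleftrightarrow> dagger U ** U = mat 1 \<and> U ** dagger U = mat 1"

definition diag_wrt :: "('n::finite) cmat \<Rightarrow> ('n \<Rightarrow> complex) \<Rightarrow> 'n cmat" where
  "diag_wrt U c = U ** diag_mat c ** dagger U"

theorem hermitian_unitary_diagonalization:
  fixes A :: "('n::finite) cmat"
  assumes "hermitian A"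
  obtains U and l :: "'n \<Rightarrow> real" where "unitary U" "A = diag_wrt U (\<lambda>i. of_real (l i))"
proof -
  obtain u and l :: "'n \<Rightarrow> real"
    where orth: "\<And>i j. cinner (u i) (u j) = (if i = j then 1 else 0)"
      and eig: "\<And>i. A *v u i = of_real (l i) *s u i"
    using hermitian_orthonormal_eigenvectors[OF assms, of UNIV] by auto
  define U :: "'n cmat" where "U = (\<chi> i j. u j $ i)"
  have U1: "dagger U ** U = mat 1"
    using orth by (simp add: U_def dagger_def matrix_matrix_mult_def mat_def vec_eq_iff cinner_def)
  then have U2: "U ** dagger U = mat 1"
    using matrix_left_right_inverse by blast
  have "A ** U = U ** diag_mat (\<lambda>i. of_real (l i))"
    using eig by (simp add: U_def diag_mat_def matrix_matrix_mult_def matrix_vector_mult_def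
        vec_eq_iff if_distrib cong: if_cong)
  then have "A ** (U ** dagger U) = diag_wrt U (\<lambda>i. of_real (l i))"
    by (simp add: diag_wrt_def matrix_mul_assoc)
  with U1 U2 show ?thesis
    using that by (simp add: unitary_def)
qed

lemma dagger_diag_mat: "dagger (diag_mat c) = diag_mat (\<lambda>i. cnj (c i))"
  by (simp add: diag_mat_def dagger_def vec_eq_iff)

lemma diag_mat_nth [simp]: "diag_mat c $ i $ j = (if i = j then c i else 0)"
  by (simp add: diag_mat_def)

lemma matrix_mult_diag_mat_nth: "(A ** diag_mat c) $ i $ j = A $ i $ j * c j"
  by (simp add: matrix_matrix_mult_def if_distrib[of "\<lambda>x. _ * x"] cong: if_cong)

lemma diag_mat_mult_nth: "(diag_mat c ** A) $ i $ j = c i * A $ i $ j"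
  by (simp add: matrix_matrix_mult_def if_distrib[of "\<lambda>x. x * _"] cong: if_cong)

lemma diag_mat_mult: "diag_mat a ** diag_mat b = diag_mat (\<lambda>i. a i * b i)"
  by (simp add: vec_eq_iff diag_mat_mult_nth)

lemma diag_mat_diff: "diag_mat a - diag_mat b = diag_mat (\<lambda>i. a i - b i)"
  by (simp add: vec_eq_iff)

lemma scaleR_diag_mat: "c *\<^sub>R diag_mat a = diag_mat (\<lambda>i. c *\<^sub>R a i)"
  by (simp add: vec_eq_iff)

lemma diag_mat_1: "diag_mat (\<lambda>i. 1) = mat 1"
  by (simp add: vec_eq_iff mat_def)

lemma trace_diag_mat: "trace (diag_mat c) = sum c UNIV"
  by (simp add: trace_def)

lemma diag_mat_matrix_vector_mult_axis: "diag_mat c *v axis k 1 = c k *s axis k 1"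
  by (simp add: matrix_vector_mult_def vec_eq_iff axis_def if_distrib[of "\<lambda>x. x * _"]
      cong: if_cong)

lemma diag_mat_matrix_vector_mult: "diag_mat c *v v = (\<chi> i. c i * v $ i)"
  by (simp add: matrix_vector_mult_def vec_eq_iff if_distrib[of "\<lambda>x. x * _"] cong: if_cong)

lemma matrix_vector_mult_axis_nth: "((A::'a::semiring_1^'n^'m) *v axis k 1) $ i = A $ i $ k"
  by (simp add: matrix_vector_mult_def axis_def if_distrib cong: if_cong)

lemma matrix_eq_if_axis_images_eq:
  fixes A B :: "'a::semiring_1^'n^'m"
  assumes "\<And>k. A *v axis k 1 = B *v axis k 1"
  shows "A = B"
  using assms by (metis matrix_vector_mult_axis_nth vec_eq_iff)

lemma matrix_diff_ldistrib: "(C::'a::ring_1^'n^'m) ** (A - B) = C ** A - C ** B"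
  by (simp add: vec_eq_iff matrix_matrix_mult_def sum_subtractf algebra_simps)

lemma matrix_diff_rdistrib: "((A::'a::ring_1^'n^'m) - B) ** C = A ** C - B ** C"
  by (simp add: vec_eq_iff matrix_matrix_mult_def sum_subtractf algebra_simps)

lemma dagger_diag_wrt: "dagger (diag_wrt U c) = diag_wrt U (\<lambda>i. cnj (c i))"
  by (simp add: diag_wrt_def dagger_matrix_mult dagger_diag_mat matrix_mul_assoc)

lemma hermitian_diag_wrt: "hermitian (diag_wrt U (\<lambda>i. of_real (l i)))"
  by (simp add: hermitian_def dagger_diag_wrt)

lemma diag_wrt_mult:
  assumes "unitary U"
  shows "diag_wrt U a ** diag_wrt U b = diag_wrt U (\<lambda>i. a i * b i)"
proof -
  have "diag_wrt U a ** diag_wrt U b = U ** diag_mat a ** (dagger U ** U) ** diag_mat b ** dagger U"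
    by (simp add: diag_wrt_def matrix_mul_assoc)
  also have "\<dots> = U ** (diag_mat a ** diag_mat b) ** dagger U"
    using assms by (simp add: unitary_def matrix_mul_assoc)
  finally show ?thesis
    by (simp add: diag_wrt_def diag_mat_mult)
qed

lemma diag_wrt_diff: "diag_wrt U a - diag_wrt U b = diag_wrt U (\<lambda>i. a i - b i)"
  unfolding diag_wrt_def diag_mat_diff[symmetric] matrix_diff_ldistrib matrix_diff_rdistrib ..

lemma scaleR_diag_wrt: "c *\<^sub>R diag_wrt U a = diag_wrt U (\<lambda>i. c *\<^sub>R a i)"
  unfolding diag_wrt_def scaleR_diag_mat[symmetric] by (simp add: scalar_matrix_assoc matrix_scalar_ac)

lemma diag_wrt_1: "unitary U \<Longrightarrow> diag_wrt U (\<lambda>i. 1) = mat 1"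
  by (simp add: diag_wrt_def diag_mat_1 unitary_def)

lemma dagger_mult_diag_wrt_mult: "unitary U \<Longrightarrow> dagger U ** diag_wrt U c ** U = diag_mat c"
  by (simp add: diag_wrt_def unitary_def matrix_mul_assoc)
    (simp flip: matrix_mul_assoc)

lemma diag_wrt_column:
  assumes "unitary U"
  shows "diag_wrt U c *v (U *v axis k 1) = c k *s (U *v axis k 1)"
proof -
  have "diag_wrt U c *v (U *v axis k 1) = U *v (diag_mat c *v ((dagger U ** U) *v axis k 1))"
    by (simp add: diag_wrt_def matrix_vector_mul_assoc matrix_mul_assoc)
  then show ?thesis
    using assms by (simp add: unitary_def diag_mat_matrix_vector_mult_axis vector_scalar_commute)
qed

lemma trace_dagger_conj: "unitary U \<Longrightarrow> trace (dagger U ** A ** U) = trace A"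
  using trace_mul_sym[of "dagger U ** A" U] by (simp add: unitary_def matrix_mul_assoc)

lemma trace_mult_diag_wrt:
  "trace (P ** diag_wrt U c) = (\<Sum>j\<in>UNIV. (dagger U ** P ** U) $ j $ j * c j)"
proof -
  have "trace (P ** diag_wrt U c) = trace (dagger U ** (P ** U ** diag_mat c))"
    using trace_mul_sym[of "P ** U ** diag_mat c" "dagger U"]
    by (simp add: diag_wrt_def matrix_mul_assoc)
  then show ?thesis
    by (simp add: trace_def matrix_mult_diag_mat_nth matrix_mul_assoc)
qed

lemma trace_diag_wrt: "unitary U \<Longrightarrow> trace (diag_wrt U c) = sum c UNIV"
  using trace_mul_sym[of "U ** diag_mat c" "dagger U"]
  by (simp add: diag_wrt_def unitary_def matrix_mul_assoc trace_diag_mat)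

lemma psd_diag_wrt:
  assumes "\<And>i. 0 \<le> r i"
  shows "psd (diag_wrt U (\<lambda>i. of_real (r i)))"
  unfolding psd_def
proof (intro conjI allI)
  fix v
  define w where "w = dagger U *v v"
  have "cinner v (diag_wrt U (\<lambda>i. of_real (r i)) *v v)
      = cinner w (diag_mat (\<lambda>i. of_real (r i)) *v w)"
    by (simp add: w_def diag_wrt_def cinner_dagger flip: matrix_vector_mul_assoc)
  also have "\<dots> = (\<Sum>i\<in>UNIV. of_real (r i) * (cnj (w $ i) * w $ i))"
    by (simp add: cinner_def diag_mat_matrix_vector_mult mult_ac)
  finally show "0 \<le> Re (cinner v (diag_wrt U (\<lambda>i. of_real (r i)) *v v))"
    using assms by (simp add: Re_sum sum_nonneg flip: complex_norm_square)
qed (rule hermitian_diag_wrt)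

lemma psd_dagger_conj:
  assumes "psd P"
  shows "psd (dagger U ** P ** U)"
  unfolding psd_def
proof (intro conjI allI)
  show "hermitian (dagger U ** P ** U)"
    using assms by (simp add: psd_def hermitian_def dagger_matrix_mult matrix_mul_assoc)
  fix v
  have "cinner v ((dagger U ** P ** U) *v v) = cinner (U *v v) (P *v (U *v v))"
    by (simp add: cinner_dagger flip: matrix_vector_mul_assoc)
  then show "0 \<le> Re (cinner v ((dagger U ** P ** U) *v v))"
    using assms by (simp add: psd_def)
qed

lemma psd_diag_nonneg:
  assumes "psd P"
  shows "0 \<le> Re (P $ j $ j)"
proof -
  have "cinner (axis j 1) (P *v axis j 1) = P $ j $ j"
    by (simp add: cinner_axis matrix_vector_mult_axis_nth)
  then show ?thesis
    using assms by (metis psd_def)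
qed

lemma effect_dagger_conj:
  assumes "unitary U" and "effect P"
  shows "effect (dagger U ** P ** U)"
proof -
  have "dagger U ** (mat 1 - P) ** U = mat 1 - dagger U ** P ** U"
    using assms(1) by (simp add: matrix_diff_ldistrib matrix_diff_rdistrib unitary_def)
  then show ?thesis
    using assms(2) psd_dagger_conj[of P U] psd_dagger_conj[of "mat 1 - P" U]
    by (simp add: effect_def)
qed

lemma effect_diag_bounds:
  assumes "effect P"
  shows "0 \<le> Re (P $ j $ j)" and "Re (P $ j $ j) \<le> 1"
  using psd_diag_nonneg[of P j] psd_diag_nonneg[of "mat 1 - P" j] assms
  by (simp_all add: effect_def mat_def)

lemma effect_diag_wrt:
  assumes "unitary U" and "\<And>i. 0 \<le> r i \<and> r i \<le> 1"
  shows "effect (diag_wrt U (\<lambda>i. of_real (r i)))"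
proof -
  have "mat 1 - diag_wrt U (\<lambda>i. of_real (r i)) = diag_wrt U (\<lambda>i. of_real (1 - r i))"
    using assms(1) by (simp add: diag_wrt_1[symmetric] diag_wrt_diff)
  then show ?thesis
    using assms psd_diag_wrt[of r U] psd_diag_wrt[of "\<lambda>i. 1 - r i" U] by (simp add: effect_def)
qed

section \<open>Square roots and trace norms\<close>

lemma psd_eigenvector_sqrt:
  assumes B: "psd B" and eig: "B *v (B *v v) = of_real c *s v" and "0 \<le> c"
  shows "B *v v = of_real (sqrt c) *s v"
proof (cases "c = 0")
  case True
  have "cinner (B *v v) (B *v v) = cinner v (B *v (B *v v))"
    using B by (simp add: psd_def cinner_hermitian)
  also have "\<dots> = 0" using eig True by (simp add: cinner_def)
  finally show ?thesis using True by (simp add: cinner_self)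
next
  case False
  define s where "s = sqrt c"
  define w where "w = B *v v - of_real s *s v"
  \<comment> \<open>\<open>B w = - s w\<close>, which positivity of \<open>B\<close> only allows for \<open>w = 0\<close>\<close>
  have s: "0 < s" "of_real s * of_real s = (of_real c :: complex)"
    using \<open>0 \<le> c\<close> False by (simp_all add: s_def flip: of_real_mult)
  have "B *v w = of_real c *s v - of_real s *s (B *v v)"
    by (simp add: w_def matrix_vector_mult_diff_distrib vector_scalar_commute eig)
  also have "\<dots> = - (of_real s *s w)"
    by (simp add: w_def vec_eq_iff algebra_simps flip: s(2))
  finally have "cinner w (B *v w) = - (of_real s * cinner w w)"
    by (simp add: cinner_def sum_negf sum_distrib_left algebra_simps)
  moreover have "0 \<le> Re (cinner w (B *v w))"
    using B by (simp add: psd_def)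
  ultimately have "s * (norm w)\<^sup>2 \<le> 0"
    by (simp add: cinner_self)
  with s(1) have "w = 0"
    by (simp add: mult_le_0_iff)
  then show ?thesis by (simp add: w_def s_def)
qed

lemma msqrt_diag_wrt:
  assumes U: "unitary U" and r: "\<And>i. 0 \<le> r i"
  shows "msqrt (diag_wrt U (\<lambda>i. of_real (r i))) = diag_wrt U (\<lambda>i. of_real (sqrt (r i)))"
  unfolding msqrt_def
proof (rule the_equality)
  let ?R = "diag_wrt U (\<lambda>i. of_real (sqrt (r i)))"
  show "psd ?R \<and> ?R ** ?R = diag_wrt U (\<lambda>i. of_real (r i))"
    using U r by (simp add: psd_diag_wrt diag_wrt_mult flip: of_real_mult)
  fix B assume B: "psd B \<and> B ** B = diag_wrt U (\<lambda>i. of_real (r i))"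
  have "B *v (U *v axis k 1) = ?R *v (U *v axis k 1)" for k
  proof -
    have "B *v (B *v (U *v axis k 1)) = (B ** B) *v (U *v axis k 1)"
      by (rule matrix_vector_mul_assoc)
    also have "\<dots> = of_real (r k) *s (U *v axis k 1)"
      using B diag_wrt_column[OF U] by simp
    finally have "B *v (B *v (U *v axis k 1)) = of_real (r k) *s (U *v axis k 1)" .
    with B r have "B *v (U *v axis k 1) = of_real (sqrt (r k)) *s (U *v axis k 1)"
      by (blast intro: psd_eigenvector_sqrt)
    then show ?thesis
      using diag_wrt_column[OF U] by simp
  qed
  then have "B ** U = ?R ** U"
    by (intro matrix_eq_if_axis_images_eq) (simp flip: matrix_vector_mul_assoc)
  then have "B ** (U ** dagger U) = ?R ** (U ** dagger U)"
    by (simp add: matrix_mul_assoc)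
  then show "B = ?R"
    using U by (simp add: unitary_def)
qed

lemma trace_norm_diag_wrt:
  assumes "unitary U"
  shows "trace_norm (diag_wrt U (\<lambda>i. of_real (l i))) = (\<Sum>i\<in>UNIV. \<bar>l i\<bar>)"
proof -
  have "dagger (diag_wrt U (\<lambda>i. of_real (l i))) ** diag_wrt U (\<lambda>i. of_real (l i))
      = diag_wrt U (\<lambda>i. of_real ((l i)\<^sup>2))"
    using assms by (simp add: dagger_diag_wrt diag_wrt_mult power2_eq_square)
  then show ?thesis
    using assms msqrt_diag_wrt[OF assms, of "\<lambda>i. (l i)\<^sup>2"]
    by (simp add: trace_norm_def trace_diag_wrt Re_sum)
qed

lemma trace_norm_scaleR:
  assumes "hermitian X"
  shows "trace_norm (c *\<^sub>R X) = \<bar>c\<bar> * trace_norm X"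
proof -
  obtain U l where U: "unitary U" and X: "X = diag_wrt U (\<lambda>i. of_real (l i))"
    using hermitian_unitary_diagonalization[OF assms] by blast
  have "c *\<^sub>R X = diag_wrt U (\<lambda>i. of_real (c * l i))"
    by (simp add: X scaleR_diag_wrt of_real_def)
  then show ?thesis
    using trace_norm_diag_wrt[OF U, of "\<lambda>i. c * l i"]
    by (simp add: X U trace_norm_diag_wrt abs_mult sum_distrib_left)
qed

lemma range_matrix_mult_subset: "range (\<lambda>x. (B ** C) *v x) \<subseteq> range (\<lambda>x. B *v x)"
  by (auto simp flip: matrix_vector_mul_assoc)

lemma idempotent_mult_eq_if_range_subset:
  assumes "B ** B = B" and "range (\<lambda>x. A *v x) \<subseteq> range (\<lambda>x. B *v x)"
  shows "B ** A = A"
proof -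
  have "(B ** A) *v x = A *v x" for x
  proof -
    obtain y where y: "A *v x = B *v y" using assms(2) by blast
    then have "(B ** A) *v x = (B ** B) *v y"
      by (simp flip: matrix_vector_mul_assoc)
    then show ?thesis using assms(1) y by simp
  qed
  then show ?thesis by (simp add: matrix_eq)
qed

lemma orthogonal_projector_eq_if_range_eq:
  assumes "hermitian P" "P ** P = P" "hermitian Q" "Q ** Q = Q"
    and "range (\<lambda>x. P *v x) = range (\<lambda>x. Q *v x)"
  shows "P = Q"
proof -
  have "P = dagger (Q ** P)"
    using assms idempotent_mult_eq_if_range_subset[of Q P] by (simp add: hermitian_def)
  also have "\<dots> = P ** Q"
    using assms by (simp add: dagger_matrix_mult hermitian_def)
  also have "\<dots> = Q"
    using assms idempotent_mult_eq_if_range_subset[of P Q] by simp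
  finally show ?thesis .
qed

lemma supp_proj_diag_wrt:
  assumes U: "unitary U"
  shows "supp_proj (diag_wrt U (\<lambda>i. of_real (l i)))
    = diag_wrt U (\<lambda>i. of_real (if l i = 0 then 0 else 1))"
    (is "supp_proj ?\<rho> = ?P")
  unfolding supp_proj_def
proof (rule the_equality)
  have P_idem: "?P ** ?P = ?P"
    using U by (simp add: diag_wrt_mult if_distrib[of "\<lambda>x. x * _"] cong: if_cong flip: of_real_mult)
  have "\<And>i. l i * inverse (l i) = (if l i = 0 then 0 else 1)"
    \<comment> \<open>using \<open>inverse 0 = 0\<close>\<close>
    by simp
  then have "?P = ?\<rho> ** diag_wrt U (\<lambda>i. of_real (inverse (l i)))"
    by (simp only: diag_wrt_mult[OF U] of_real_mult[symmetric])
  moreover have "?\<rho> = ?P ** ?\<rho>"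
    using U by (simp add: diag_wrt_mult if_distrib[of "\<lambda>x. x * _"] cong: if_cong flip: of_real_mult)
  ultimately have "range (\<lambda>x. ?P *v x) = range (\<lambda>x. ?\<rho> *v x)"
    using range_matrix_mult_subset by (metis subset_antisym)
  then show "hermitian ?P \<and> ?P ** ?P = ?P \<and> range (\<lambda>x. ?P *v x) = range (\<lambda>x. ?\<rho> *v x)"
    using P_idem hermitian_diag_wrt[of U "\<lambda>i. if l i = 0 then 0 else 1"] by blast
  then show "P = ?P" if "hermitian P \<and> P ** P = P \<and> range (\<lambda>x. P *v x) = range (\<lambda>x. ?\<rho> *v x)"
    for P
    using that orthogonal_projector_eq_if_range_eq[of P ?P] by auto
qed

lemma effect_supp_proj:
  assumes "hermitian \<rho>"
  shows "effect (supp_proj \<rho>)"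
proof -
  obtain U l where U: "unitary U" and \<rho>: "\<rho> = diag_wrt U (\<lambda>i. of_real (l i))"
    using hermitian_unitary_diagonalization[OF assms] by blast
  show ?thesis
    unfolding \<rho> supp_proj_diag_wrt[OF U] by (rule effect_diag_wrt[OF U]) simp
qed

lemma supp_proj_mult_self:
  assumes "hermitian \<rho>"
  shows "supp_proj \<rho> ** \<rho> = \<rho>"
proof -
  obtain U l where U: "unitary U" and \<rho>: "\<rho> = diag_wrt U (\<lambda>i. of_real (l i))"
    using hermitian_unitary_diagonalization[OF assms] by blast
  show ?thesis
    unfolding \<rho> supp_proj_diag_wrt[OF U]
    using U by (simp add: diag_wrt_mult if_distrib[of "\<lambda>x. x * _"] cong: if_cong flip: of_real_mult)
qed

section \<open>Trace distance\<close>

lemma trace_mult_effect_le_trace_norm: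
  assumes X: "hermitian X" "Re (trace X) = 0" and P: "effect P"
  shows "2 * Re (trace (P ** X)) \<le> trace_norm X"
proof -
  obtain U l where U: "unitary U" and X_eq: "X = diag_wrt U (\<lambda>i. of_real (l i))"
    using hermitian_unitary_diagonalization[OF X(1)] by blast
  define p where "p j = Re ((dagger U ** P ** U) $ j $ j)" for j
  have p: "0 \<le> p j" "p j \<le> 1" for j
    unfolding p_def using effect_diag_bounds effect_dagger_conj[OF U P] by blast+
  have "2 * Re (trace (P ** X)) = (\<Sum>j\<in>UNIV. 2 * p j * l j)"
    by (simp add: X_eq trace_mult_diag_wrt Re_sum p_def sum_distrib_left mult.assoc)
  also have "\<dots> \<le> (\<Sum>j\<in>UNIV. \<bar>l j\<bar> + l j)"
  proof (rule sum_mono)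
    fix j
    show "2 * p j * l j \<le> \<bar>l j\<bar> + l j"
      using p[of j] mult_left_mono[of "p j" 1 "l j"] mult_right_mono_neg[of 0 "p j" "l j"]
      by (cases "0 \<le> l j") (auto simp: mult.commute)
  qed
  also have "\<dots> = (\<Sum>j\<in>UNIV. \<bar>l j\<bar>)"
    using X(2) U by (simp add: X_eq sum.distrib trace_diag_wrt Re_sum)
  finally show ?thesis
    by (simp add: X_eq U trace_norm_diag_wrt)
qed

lemma sum_diag_dagger_conj_state:
  assumes "is_state \<rho>" and "unitary U"
  shows "(\<Sum>j\<in>UNIV. Re ((dagger U ** \<rho> ** U) $ j $ j)) = 1"
proof -
  have "(\<Sum>j\<in>UNIV. Re ((dagger U ** \<rho> ** U) $ j $ j)) = Re (trace (dagger U ** \<rho> ** U))"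
    by (simp add: trace_def Re_sum)
  then show ?thesis
    using assms by (simp add: trace_dagger_conj is_state_def)
qed

lemma trace_norm_diff_states_le:
  assumes \<rho>: "is_state \<rho>" and \<sigma>: "is_state \<sigma>"
  shows "trace_norm (\<rho> - \<sigma>) \<le> 2"
proof -
  obtain U l where U: "unitary U" and diff: "\<rho> - \<sigma> = diag_wrt U (\<lambda>i. of_real (l i))"
    using hermitian_unitary_diagonalization[of "\<rho> - \<sigma>"] \<rho> \<sigma> by (metis hermitian_diff hermitian_state)
  define f where "f j = Re ((dagger U ** \<rho> ** U) $ j $ j)" for j
  define g where "g j = Re ((dagger U ** \<sigma> ** U) $ j $ j)" for j
  have conj: "dagger U ** (\<rho> - \<sigma>) ** U = diag_mat (\<lambda>i. of_real (l i))"
    using U by (simp add: diff dagger_mult_diag_wrt_mult)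
  have l: "l j = f j - g j" for j
    using arg_cong[OF conj, of "\<lambda>A. Re (A $ j $ j)"]
    by (simp add: f_def g_def matrix_diff_ldistrib matrix_diff_rdistrib)
  have "trace_norm (\<rho> - \<sigma>) = (\<Sum>j\<in>UNIV. \<bar>f j - g j\<bar>)"
    unfolding diff trace_norm_diag_wrt[OF U] by (simp add: l)
  also have "\<dots> \<le> (\<Sum>j\<in>UNIV. f j + g j)"
  proof (rule sum_mono)
    fix j
    have "0 \<le> f j" "0 \<le> g j"
      using \<rho> \<sigma> unfolding f_def g_def is_state_def by (blast intro: psd_diag_nonneg psd_dagger_conj)+
    then show "\<bar>f j - g j\<bar> \<le> f j + g j" by linarith
  qed
  also have "\<dots> = 2"
    using sum_diag_dagger_conj_state[OF \<rho> U] sum_diag_dagger_conj_state[OF \<sigma> U]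
    by (simp add: f_def g_def sum.distrib)
  finally show ?thesis .
qed

lemma trace_distance_ge_effect:
  assumes \<rho>: "is_state \<rho>" and \<sigma>: "is_state \<sigma>" and P: "effect P" "trace (P ** \<rho>) = 1"
  shows "1 - Re (trace (P ** \<sigma>)) \<le> trace_norm (\<rho> - \<sigma>) / 2"
proof -
  have "2 * Re (trace (P ** (\<rho> - \<sigma>))) \<le> trace_norm (\<rho> - \<sigma>)"
    using \<rho> \<sigma> P(1)
    by (intro trace_mult_effect_le_trace_norm hermitian_diff)
      (auto simp: hermitian_state trace_sub is_state_def)
  then show ?thesis
    using P(2) by (simp add: matrix_diff_ldistrib trace_sub)
qed

lemma trace_distance_mixture_le:
  assumes \<rho>: "is_state \<rho>" and \<tau>: "is_state \<tau>" and "0 \<le> s"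
  shows "trace_norm (\<rho> - (1 / (1 + s)) *\<^sub>R (\<rho> + s *\<^sub>R \<tau>)) / 2 \<le> 1 - 1 / (1 + s)"
proof -
  have c: "1 - 1 / (1 + s) = s / (1 + s)"
    using \<open>0 \<le> s\<close> by (simp add: field_simps)
  have "\<rho> - (1 / (1 + s)) *\<^sub>R (\<rho> + s *\<^sub>R \<tau>) = (1 - 1 / (1 + s)) *\<^sub>R \<rho> - (s / (1 + s)) *\<^sub>R \<tau>"
    by (simp add: scaleR_add_right scaleR_diff_left)
  then have "trace_norm (\<rho> - (1 / (1 + s)) *\<^sub>R (\<rho> + s *\<^sub>R \<tau>)) / 2
      = s / (1 + s) * (trace_norm (\<rho> - \<tau>) / 2)"
    using \<open>0 \<le> s\<close> \<rho> \<tau>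
    by (simp add: c trace_norm_scaleR hermitian_diff hermitian_state flip: scaleR_diff_right)
  also have "\<dots> \<le> s / (1 + s)"
    using \<open>0 \<le> s\<close> trace_norm_diff_states_le[OF \<rho> \<tau>] by (intro mult_left_le) auto
  finally show ?thesis
    by (simp add: c)
qed

lemma neglog_antimono: "s \<le> t \<Longrightarrow> neglog t \<le> neglog s"
  by (simp add: neglog_def)

lemma ereal_le_neglog_iff: "ereal x \<le> neglog t \<longleftrightarrow> t \<le> 2 powr - x"
proof (cases "0 < t")
  case True
  then have "ereal x \<le> neglog t \<longleftrightarrow> log 2 t \<le> - x"
    by (auto simp: neglog_def)
  also have "\<dots> \<longleftrightarrow> t \<le> 2 powr - x"
    using True by (simp add: log_le_iff)
  finally show ?thesis .
next
  case False
  moreover have "0 < 2 powr - x" by simp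
  ultimately have "t \<le> 2 powr - x" by linarith
  with False show ?thesis
    by (simp add: neglog_def)
qed

definition Dmin_rel :: "('n::finite) cmat \<Rightarrow> 'n cmat \<Rightarrow> ereal" where
  "Dmin_rel \<rho> \<sigma> = (SUP P\<in>{P. effect P \<and> trace (P ** \<rho>) = 1}. neglog (Re (trace (P ** \<sigma>))))"

lemma Dmin_aff_le_Dmin_rel: "\<sigma> \<in> F \<Longrightarrow> Dmin_aff F \<rho> \<le> Dmin_rel \<rho> \<sigma>"
  unfolding Dmin_aff_def Dmin_rel_def by (intro INF_lower hull_inc)

lemma Dmin_le_Dmin_rel:
  assumes "is_state \<rho>" and "\<sigma> \<in> F"
  shows "Dmin F \<rho> \<le> Dmin_rel \<rho> \<sigma>"
proof -
  have h: "hermitian \<rho>" using assms(1) by (rule hermitian_state)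
  have "Dmin F \<rho> \<le> neglog (Re (trace (supp_proj \<rho> ** \<sigma>)))"
    unfolding Dmin_def using \<open>\<sigma> \<in> F\<close> by (rule INF_lower)
  also have "\<dots> \<le> Dmin_rel \<rho> \<sigma>"
    unfolding Dmin_rel_def
    using assms(1) effect_supp_proj[OF h] supp_proj_mult_self[OF h]
    by (intro SUP_upper) (simp add: is_state_def)
  finally show ?thesis .
qed

lemma trace_distance_ge_of_Dmin_rel:
  assumes \<rho>: "is_state \<rho>" and \<sigma>: "is_state \<sigma>" and r: "ereal r \<le> Dmin_rel \<rho> \<sigma>"
  shows "1 - 2 powr - r \<le> trace_norm (\<rho> - \<sigma>) / 2"
proof -
  have "Dmin_rel \<rho> \<sigma> \<le> neglog (1 - trace_norm (\<rho> - \<sigma>) / 2)"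
    unfolding Dmin_rel_def
  proof (rule SUP_least)
    fix P assume "P \<in> {P. effect P \<and> trace (P ** \<rho>) = 1}"
    then have "1 - Re (trace (P ** \<sigma>)) \<le> trace_norm (\<rho> - \<sigma>) / 2"
      using trace_distance_ge_effect[OF \<rho> \<sigma>] by blast
    then show "neglog (Re (trace (P ** \<sigma>))) \<le> neglog (1 - trace_norm (\<rho> - \<sigma>) / 2)"
      by (intro neglog_antimono) linarith
  qed
  with r have "ereal r \<le> neglog (1 - trace_norm (\<rho> - \<sigma>) / 2)"
    by (rule order_trans)
  then show ?thesis
    by (simp add: ereal_le_neglog_iff)
qed

lemma Rtr_ge_of_Dmin_rel:
  assumes "\<forall>\<sigma>\<in>F. is_state \<sigma>" and "is_state \<rho>" and "\<And>\<sigma>. \<sigma> \<in> F \<Longrightarrow> ereal r \<le> Dmin_rel \<rho> \<sigma>"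
  shows "ereal (1 - 2 powr - r) \<le> Rtr F \<rho>"
  unfolding Rtr_def
proof (rule INF_greatest)
  fix \<sigma> assume "\<sigma> \<in> F"
  with assms have "1 - 2 powr - r \<le> trace_norm (\<rho> - \<sigma>) / 2"
    by (intro trace_distance_ge_of_Dmin_rel) auto
  then show "ereal (1 - 2 powr - r) \<le> ereal (trace_norm (\<rho> - \<sigma>) / 2)"
    by simp
qed

lemma Dmax_le_Ds: "\<forall>\<sigma>\<in>F. is_state \<sigma> \<Longrightarrow> Dmax F \<rho> \<le> Ds F \<rho>"
  unfolding Dmax_def Ds_def by (intro Inf_superset_mono) blast

lemma le_one_minus_powr_if_above:
  fixes R :: ereal
  assumes "\<And>x. r < x \<Longrightarrow> R \<le> ereal (1 - 2 powr - x)"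
  shows "R \<le> ereal (1 - 2 powr - r)"
proof (rule dense_ge)
  fix y assume y: "ereal (1 - 2 powr - r) < y"
  show "R \<le> y"
  proof (cases y)
    case (real c)
    show ?thesis
    proof (cases "c < 1")
      case True
      from y real have "1 - c < 2 powr - r" by simp
      with True have "log 2 (1 - c) < - r" by (simp add: log_less_iff)
      then have "r < - log 2 (1 - c)" by simp
      then have "R \<le> ereal (1 - 2 powr - (- log 2 (1 - c)))"
        by (rule assms)
      with True real show ?thesis by simp
    next
      case False
      have "R \<le> ereal (1 - 2 powr - (r + 1))"
        by (rule assms) simp
      also have "\<dots> \<le> y"
        using False real powr_gt_zero[of 2 "- (r + 1)"] by (simp del: powr_gt_zero)
      finally show ?thesis .
    qed
  qed (use y in auto)
qed

lemma Rtr_le_of_Dmax: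
  assumes \<rho>: "is_state \<rho>" and "Dmax F \<rho> \<le> ereal r"
  shows "Rtr F \<rho> \<le> ereal (1 - 2 powr - r)"
proof (rule le_one_minus_powr_if_above)
  fix x assume "r < x"
  then have "Dmax F \<rho> < ereal x"
    using assms(2) by (simp add: le_less_trans)
  then obtain s \<tau> where s: "0 \<le> s" and \<tau>: "is_state \<tau>"
    and mix: "(1 / (1 + s)) *\<^sub>R (\<rho> + s *\<^sub>R \<tau>) \<in> F" and "log 2 (1 + s) < x"
    unfolding Dmax_def Inf_less_iff by auto
  then have "1 / (1 + s) > 2 powr - x"
    by (simp add: log_less_iff powr_minus_divide divide_strict_left_mono)
  have "Rtr F \<rho> \<le> ereal (trace_norm (\<rho> - (1 / (1 + s)) *\<^sub>R (\<rho> + s *\<^sub>R \<tau>)) / 2)"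
    unfolding Rtr_def using mix by (rule INF_lower)
  also have "\<dots> \<le> ereal (1 - 1 / (1 + s))"
    using trace_distance_mixture_le[OF \<rho> \<tau> s] by simp
  also have "\<dots> \<le> ereal (1 - 2 powr - x)"
    using \<open>1 / (1 + s) > 2 powr - x\<close> by simp
  finally show "Rtr F \<rho> \<le> ereal (1 - 2 powr - x)" .
qed

theorem proposition13:
  fixes F :: "('n::finite) cmat set" and \<Phi> :: "'n cmat" and r :: real
  assumes "convex F" and "closed F" and "\<forall>\<sigma>\<in>F. is_state \<sigma>"
    and "is_state \<Phi>"
    and "(Dmin F \<Phi> = ereal r \<and> Ds F \<Phi> = ereal r) \<or>
         (Dmin_aff F \<Phi> = ereal r \<and> Dmax F \<Phi> = ereal r)"
  shows "Rtr F \<Phi> = ereal (1 - 2 powr (- r))"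
proof (rule antisym)
  have "Dmax F \<Phi> \<le> ereal r"
    using assms(5) Dmax_le_Ds[OF assms(3), of \<Phi>] by auto
  with assms(4) show "Rtr F \<Phi> \<le> ereal (1 - 2 powr - r)"
    by (rule Rtr_le_of_Dmax)
  show "ereal (1 - 2 powr - r) \<le> Rtr F \<Phi>"
  proof (rule Rtr_ge_of_Dmin_rel[OF assms(3,4)])
    fix \<sigma> assume "\<sigma> \<in> F"
    then show "ereal r \<le> Dmin_rel \<Phi> \<sigma>"
      using assms(5) Dmin_le_Dmin_rel[OF assms(4)] Dmin_aff_le_Dmin_rel by metis
  qed
qed

end
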